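(* Let $K$ be an oriented knot in $\Sigma\times I$ with a diagram $D$, and let $m(K)$ be the knot whose diagram is obtained from $D$ by switching all crossings. Then for every oriented closed curve $\gamma$ on $\Sigma$ with $[\gamma]\in\mathcal{H}_1^K(\Sigma,\mathbb{Z})$, we have $W_{m(K)}^{\gamma}(t)=-W_K^{\gamma}(t^{-1})$.
   Context: $\Sigma$ is a closed oriented surface, $I=[0,1]$; a knot in $\Sigma\times I$ is an oriented smooth embedding of $S^1$, with diagram its projection to $\Sigma$ carrying over/under information; $C(D)$ is the set of crossings and $w(c)\in\{\pm1\}$ the writhe. $\mathcal{H}_1^K(\Sigma,\mathbb{Z})=\{\alpha\in H_1(\Sigma,\mathbb{Z}):\alpha\cdot[K]=0\}$, $\cdot$ the algebraic intersection number. For a diagram $D$ transverse to $\gamma$ away from crossings: points of $D\cap\gamma$ cut $D$ into arcs; $x\in D\cap\gamma$ is positive if (tangent of $\gamma$, tangent of $D$) is a positive basis of $T_x\Sigma$, negative otherwise; a coloring assigns integers to arcs increasing by one at positive and decreasing by one at negative points when walking along $D$ (exists, unique up to a constant); $f_\gamma(c)$ is the integer on the over-strand minus that on the under-strand at $c$. The writhe polynomial is $W_K^{\gamma}(t)=\sum_{c\in C(D),\,f_\gamma(c)\neq0}w(c)t^{f_\gamma(c)}$, depending only on $K$ and $[\gamma]$. *)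

theory Defs
  imports Main "HOL-Computational_Algebra.Formal_Laurent_Series"
begin

text \<open>Combinatorial model of a knot diagram D on \<Sigma> drawn transversally to a closed
curve \<gamma>.  Walking once along D from a base point we meet a cyclic sequence of events:
passages through a crossing c (as the over- or the under-strand) and intersection points
with \<gamma> (carrying their sign +1 / -1).  In addition, for every crossing c we record
cross_sign c = sign of the basis (tangent at the first passage, tangent at the second
passage), which is determined by the projected curve alone (not by over/under data).\<close>

datatype 'c event = Pass 'c bool  \<comment> \<open>passage through crossing; True = over-strand\<close>
                  | GPt int        \<comment> \<open>point of D \<inter> \<gamma> with its sign\<close>

record 'c diagram =
  word :: "'c event list"
  cross_sign :: "'c \<Rightarrow> int"

definition crossings :: "'c diagram \<Rightarrow> 'c set" where
  "crossings D = {c. \<exists>b. Pass c b \<in> set (word D)}"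

definition valid_diagram :: "'c diagram \<Rightarrow> bool" where
  "valid_diagram D \<longleftrightarrow> word D \<noteq> [] \<and>
     (\<forall>c\<in>crossings D.
        (\<exists>!i. i < length (word D) \<and> word D ! i = Pass c True) \<and>
        (\<exists>!i. i < length (word D) \<and> word D ! i = Pass c False) \<and>
        cross_sign D c \<in> {1, -1}) \<and>
     (\<forall>s. GPt s \<in> set (word D) \<longrightarrow> s \<in> {1, -1})"

definition intersection_number :: "'c diagram \<Rightarrow> int" where
  "intersection_number D = (\<Sum>i<length (word D). case word D ! i of GPt s \<Rightarrow> s | Pass _ _ \<Rightarrow> 0)"

definition jump :: "'c event \<Rightarrow> int" where
  "jump e = (case e of GPt s \<Rightarrow> s | Pass _ _ \<Rightarrow> 0)"

text \<open>A coloring: col i is the integer on the arc containing / just after event i; it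
increases by one at positive and decreases by one at negative points of D \<inter> \<gamma>.\<close>
definition is_coloring :: "'c diagram \<Rightarrow> (nat \<Rightarrow> int) \<Rightarrow> bool" where
  "is_coloring D col \<longleftrightarrow>
     (\<forall>i < length (word D).
        col (Suc i mod length (word D)) = col i + jump (word D ! (Suc i mod length (word D))))"

definition over_pos :: "'c diagram \<Rightarrow> 'c \<Rightarrow> nat" where
  "over_pos D c = (THE i. i < length (word D) \<and> word D ! i = Pass c True)"

definition under_pos :: "'c diagram \<Rightarrow> 'c \<Rightarrow> nat" where
  "under_pos D c = (THE i. i < length (word D) \<and> word D ! i = Pass c False)"

definition f_gamma :: "'c diagram \<Rightarrow> 'c \<Rightarrow> int" where
  "f_gamma D c = (let col = (SOME col. is_coloring D col) in col (over_pos D c) - col (under_pos D c))"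

text \<open>Writhe: +cross_sign if the first passage is the over-strand, otherwise its negative
(i.e. the sign of the basis (over tangent, under tangent)).\<close>
definition writhe :: "'c diagram \<Rightarrow> 'c \<Rightarrow> int" where
  "writhe D c = (if over_pos D c < under_pos D c then cross_sign D c else - cross_sign D c)"

definition writhe_poly :: "'c diagram \<Rightarrow> int fls" where
  "writhe_poly D = (\<Sum>c\<in>crossings D.
      if f_gamma D c \<noteq> 0 then fls_const (writhe D c) * fls_X_intpow (f_gamma D c) else 0)"

fun switch_event :: "'c event \<Rightarrow> 'c event" where
  "switch_event (Pass c b) = Pass c (\<not> b)"
| "switch_event (GPt s) = GPt s"

definition mirror :: "'c diagram \<Rightarrow> 'c diagram" where
  "mirror D = D\<lparr>word := map switch_event (word D)\<rparr>"

end

theory Submission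
  imports Defs
begin

(* Switching every crossing keeps the projected curve, hence the points of D \<inter> \<gamma>,
   their signs and the colorings, and only exchanges the over- and under-passage of each
   crossing.  So f_\<gamma> changes sign, and so does the writhe, which is the sign of the basis
   (over tangent, under tangent). *)

lemma switch_event_eq_Pass_iff: "switch_event e = Pass c b \<longleftrightarrow> e = Pass c (\<not> b)"
  by (cases e) auto

lemma jump_switch_event [simp]: "jump (switch_event e) = jump e"
  by (cases e) (simp_all add: jump_def)

lemma length_word_mirror [simp]: "length (word (mirror D)) = length (word D)"
  by (simp add: mirror_def)

lemma nth_word_mirror [simp]:
  "i < length (word D) \<Longrightarrow> word (mirror D) ! i = switch_event (word D ! i)"
  by (simp add: mirror_def)

lemma cross_sign_mirror [simp]: "cross_sign (mirror D) = cross_sign D"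
  by (simp add: mirror_def)

lemma Pass_in_word_mirror_iff:
  "Pass c b \<in> set (word (mirror D)) \<longleftrightarrow> Pass c (\<not> b) \<in> set (word D)"
  by (force simp: mirror_def switch_event_eq_Pass_iff eq_commute[of "Pass c b"])

lemma crossings_mirror [simp]: "crossings (mirror D) = crossings D"
  unfolding crossings_def Pass_in_word_mirror_iff ex_bool_eq by auto

lemma over_pos_mirror [simp]: "over_pos (mirror D) c = under_pos D c"
  unfolding over_pos_def under_pos_def
  by (rule arg_cong[where f = The]) (auto simp: switch_event_eq_Pass_iff)

lemma under_pos_mirror [simp]: "under_pos (mirror D) c = over_pos D c"
  unfolding over_pos_def under_pos_def
  by (rule arg_cong[where f = The]) (auto simp: switch_event_eq_Pass_iff)

lemma is_coloring_mirror [simp]: "is_coloring (mirror D) = is_coloring D"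
proof -
  have "Suc i mod length (word D) < length (word D)" if "i < length (word D)" for i
    using that by (auto intro: mod_less_divisor)
  then show ?thesis
    unfolding is_coloring_def by (intro ext) simp
qed

(* No coloring needs to exist: D and mirror D have literally the same colorings, so the
   choice in f_gamma picks the same one for both. *)

lemma f_gamma_mirror [simp]: "f_gamma (mirror D) c = - f_gamma D c"
  unfolding f_gamma_def Let_def by simp

lemma over_pos_neq_under_pos:
  assumes "valid_diagram D" "c \<in> crossings D"
  shows "over_pos D c \<noteq> under_pos D c"
proof -
  from assms have over: "\<exists>!i. i < length (word D) \<and> word D ! i = Pass c True"
    and under: "\<exists>!i. i < length (word D) \<and> word D ! i = Pass c False"
    unfolding valid_diagram_def by auto
  have "word D ! over_pos D c = Pass c True"
    using theI'[OF over] unfolding over_pos_def by blast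
  moreover have "word D ! under_pos D c = Pass c False"
    using theI'[OF under] unfolding under_pos_def by blast
  ultimately show ?thesis by auto
qed

lemma writhe_mirror:
  assumes "valid_diagram D" "c \<in> crossings D"
  shows "writhe (mirror D) c = - writhe D c"
  using over_pos_neq_under_pos[OF assms] unfolding writhe_def by simp

lemma fls_nth_writhe_poly:
  "fls_nth (writhe_poly D) k =
     (\<Sum>c\<in>crossings D. if f_gamma D c = k \<and> k \<noteq> 0 then writhe D c else 0)"
  unfolding writhe_poly_def fls_nth_sum by (intro sum.cong) auto

theorem proposition3p4:
  fixes D :: "'c diagram"
  assumes "valid_diagram D"
    and "intersection_number D = 0"
  shows "\<forall>k::int. fls_nth (writhe_poly (mirror D)) k = - fls_nth (writhe_poly D) (- k)"
proof
  fix k :: int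
  have "fls_nth (writhe_poly (mirror D)) k =
      (\<Sum>c\<in>crossings D. - (if f_gamma D c = - k \<and> - k \<noteq> 0 then writhe D c else 0))"
    unfolding fls_nth_writhe_poly crossings_mirror f_gamma_mirror
    by (intro sum.cong) (auto simp: writhe_mirror[OF assms(1)])
  also have "\<dots> = - fls_nth (writhe_poly D) (- k)"
    by (simp only: fls_nth_writhe_poly sum_negf)
  finally show "fls_nth (writhe_poly (mirror D)) k = - fls_nth (writhe_poly D) (- k)" .
qed

end
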